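(* Let $n\ge1$, $m\ge2$, let $v$ be a vertex of $Y_{n,m}$ and let $p$ be a pivot of $v$. Then $\operatorname{ps}_p(v)=\sum_{i=1}^{p}iv_i+\sum_{i=p+1}^{m}(m+1-i)v_i$. In particular, if $p$ is an inner pivot, then $\operatorname{ps}_p(v)\le\binom{p+1}{2}+\binom{m-p+1}{2}$.
   Context: The Yoke graph $Y_{n,m}$ has vertices the tuples $v=(v_0,\dots,v_{m+1})$ with $v_0,v_{m+1}\in\mathbb{Z}_n$ (identified with their least non-negative representatives), $v_1,\dots,v_m\in\{0,1\}$, $\sum v_i\equiv0\pmod n$; $u\sim v$ iff $u=\overleftarrow{s}_i(v)$ or $u=\overrightarrow{s}_i(v)$ for some $0\le i\le m$, where $\overleftarrow{s}_i(v)$ replaces $v_i,v_{i+1}$ by $v_i+1,v_{i+1}-1$ and $\overrightarrow{s}_i(v)$ by $v_i-1,v_{i+1}+1$ (buckets mod $n$). A pivot of $v$ is an integer $-1\le p\le m+1$ with $n\mid\sum_{i=0}^{p}v_i$; $-1$ and $m+1$ are outer pivots, others are inner pivots. For a path $P$ from $v$ to the zero vertex $0$: $0\le p\le m$ is a wall if no step of $P$ changes entries $p,p+1$; $-1$ is a wall if no step of $P$ is a left shift $\overleftarrow{s}_0$; $m+1$ is a wall if no step is a right shift $\overrightarrow{s}_m$. For a pivot $p$ of $v$, $\operatorname{ps}_p(v)$ denotes the minimum length of a path from $v$ to $0$ having $p$ as a wall. *)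

theory Defs
  imports Main "HOL-Library.Extended_Nat"
begin

definition yoke_vertex :: "nat \<Rightarrow> nat \<Rightarrow> int list \<Rightarrow> bool" where
  "yoke_vertex n m v \<longleftrightarrow>
     length v = m + 2 \<and>
     0 \<le> v ! 0 \<and> v ! 0 < int n \<and>
     0 \<le> v ! (m+1) \<and> v ! (m+1) < int n \<and>
     (\<forall>i\<in>{1..m}. v ! i \<in> {0, 1}) \<and>
     int n dvd sum_list v"

definition yoke_zero :: "nat \<Rightarrow> int list" where
  "yoke_zero m = replicate (m + 2) 0"

definition add_entry :: "nat \<Rightarrow> nat \<Rightarrow> nat \<Rightarrow> int \<Rightarrow> int list \<Rightarrow> int list" where
  "add_entry n m j d v =
     v[j := (if j = 0 \<or> j = m + 1 then (v ! j + d) mod int n else v ! j + d)]"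

definition shift :: "nat \<Rightarrow> nat \<Rightarrow> nat \<times> bool \<Rightarrow> int list \<Rightarrow> int list" where
  "shift n m s v = (case s of (i, lft) \<Rightarrow>
     if lft then add_entry n m (i+1) (-1) (add_entry n m i 1 v)
     else add_entry n m (i+1) 1 (add_entry n m i (-1) v))"

fun yoke_path :: "nat \<Rightarrow> nat \<Rightarrow> int list \<Rightarrow> (nat \<times> bool) list \<Rightarrow> int list \<Rightarrow> bool" where
  "yoke_path n m v [] w \<longleftrightarrow> v = w"
| "yoke_path n m v (s # ss) w \<longleftrightarrow>
     fst s \<le> m \<and> yoke_vertex n m (shift n m s v) \<and> yoke_path n m (shift n m s v) ss w"

definition is_pivot :: "nat \<Rightarrow> nat \<Rightarrow> int list \<Rightarrow> int \<Rightarrow> bool" where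
  "is_pivot n m v p \<longleftrightarrow> -1 \<le> p \<and> p \<le> int m + 1 \<and>
     int n dvd (\<Sum>i\<in>{0..p}. v ! nat i)"

definition is_wall :: "nat \<Rightarrow> (nat \<times> bool) list \<Rightarrow> int \<Rightarrow> bool" where
  "is_wall m P p \<longleftrightarrow>
     (if p = -1 then (0, True) \<notin> set P
      else if p = int m + 1 then (m, False) \<notin> set P
      else (\<forall>s\<in>set P. fst s \<noteq> nat p))"

definition ps :: "nat \<Rightarrow> nat \<Rightarrow> int \<Rightarrow> int list \<Rightarrow> enat" where
  "ps n m p v = Inf {enat (length P) | P. yoke_path n m v P (yoke_zero m) \<and> is_wall m P p}"

end

theory Submission
  imports Defs
begin

text \<open>Let Phi_p(u) = sum_j w_j u_j over all positions 0..m+1, with the tent weights w_j = j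
  for j <= p and w_j = m + 1 - j for j > p: this is the right-hand side of the formula, where an
  outer pivot gives the bucket next to it the weight m + 1 and all other buckets weight 0. A step
  respecting the wall at p moves a unit between neighbouring positions on one side of p, whose
  weights differ by one. Entries are reduced mod n only in buckets, which have weight 0 unless
  they are next to an outer pivot, and then the wall lets the step only take a unit out of them.
  So every admissible step lowers Phi_p by at most one, and ps_p(v) >= Phi_p(v).

  Conversely, a vertex u <> 0 with pivot p admits an admissible step that moves a unit one
  position away from p without any reduction mod n: the leftmost inner unit left of p moves left,
  the rightmost inner unit right of p moves right, and if there are no inner units, the pivot
  condition forces p to be outer and the bucket next to it to be non-empty. Such a step lowers
  Phi_p by exactly one and keeps p a pivot, so iterating it reaches 0 after Phi_p(v) steps.
  The binomial bound is Phi_p(v) <= w_1 + ... + w_m.\<close>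

lemma yoke_vertex_length: "yoke_vertex n m u \<Longrightarrow> length u = m + 2"
  by (simp add: yoke_vertex_def)

lemma yoke_vertex_n_pos: "yoke_vertex n m u \<Longrightarrow> 1 \<le> n"
  unfolding yoke_vertex_def by (elim conjE) linarith

lemma yoke_vertex_bucket_range:
  "yoke_vertex n m u \<Longrightarrow> j = 0 \<or> j = m + 1 \<Longrightarrow> 0 \<le> u ! j \<and> u ! j < int n"
  by (auto simp: yoke_vertex_def)

lemma yoke_vertex_inner: "yoke_vertex n m u \<Longrightarrow> 1 \<le> j \<Longrightarrow> j \<le> m \<Longrightarrow> u ! j = 0 \<or> u ! j = 1"
  by (auto simp: yoke_vertex_def)

lemma yoke_vertex_nth_nonneg: "yoke_vertex n m u \<Longrightarrow> j \<le> m + 1 \<Longrightarrow> 0 \<le> u ! j"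
  using yoke_vertex_bucket_range[of n m u j] yoke_vertex_inner[of n m u j]
  by (cases "j = 0 \<or> j = m + 1") auto

lemma sum_list_conv_sum_nth: "length u = m + 2 \<Longrightarrow> sum_list u = (\<Sum>j\<le>m+1. u ! j)"
  by (simp add: sum_list_sum_nth atLeast0LessThan lessThan_Suc_atMost[symmetric])

lemma is_pivot_iff:
  "is_pivot n m u p \<longleftrightarrow> -1 \<le> p \<and> p \<le> int m + 1 \<and> (0 \<le> p \<longrightarrow> int n dvd (\<Sum>j\<le>nat p. u ! j))"
proof -
  have "(\<Sum>i\<in>{0..p}. u ! nat i) = (\<Sum>j\<le>nat p. u ! j)" if "0 \<le> p"
  proof -
    have "{0..p} = int ` {..nat p}"
      using that by (simp add: image_int_atLeastAtMost atLeast0AtMost[symmetric])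
    then show ?thesis
      by (simp add: sum.reindex)
  qed
  then show ?thesis
    by (cases "0 \<le> p") (auto simp: is_pivot_def)
qed

definition step_sign :: "bool \<Rightarrow> int" where
  "step_sign d = (if d then 1 else -1)"

definition add_entry_value :: "nat \<Rightarrow> nat \<Rightarrow> nat \<Rightarrow> int \<Rightarrow> int \<Rightarrow> int" where
  "add_entry_value n m j d x = (if j = 0 \<or> j = m + 1 then (x + d) mod int n else x + d)"

lemma add_entry_value_inner: "j \<noteq> 0 \<Longrightarrow> j \<noteq> m + 1 \<Longrightarrow> add_entry_value n m j d x = x + d"
  by (simp add: add_entry_value_def)

lemma add_entry_value_cong: "int n dvd add_entry_value n m j d x - (x + d)"
  by (simp add: add_entry_value_def dvd_eq_mod_eq_0 mod_diff_left_eq)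

lemma add_entry_value_bucket_range:
  "1 \<le> n \<Longrightarrow> j = 0 \<or> j = m + 1 \<Longrightarrow>
    0 \<le> add_entry_value n m j d x \<and> add_entry_value n m j d x < int n"
  by (simp add: add_entry_value_def)

lemma add_entry_value_eq: "0 \<le> x + d \<Longrightarrow> x + d < int n \<Longrightarrow> add_entry_value n m j d x = x + d"
  by (simp add: add_entry_value_def)

lemma add_entry_value_minus_one_ge:
  assumes "0 \<le> x" "x < int n"
  shows "x - 1 \<le> add_entry_value n m j (-1) x"
proof (cases "x = 0")
  case True
  have "0 \<le> (x - 1) mod int n"
    using assms by simp
  then show ?thesis
    using True by (simp add: add_entry_value_def)
qed (use assms in \<open>simp add: add_entry_value_def\<close>)

lemma shift_eq_list_update:
  "shift n m (i, d) u = u[i := add_entry_value n m i (step_sign d) (u ! i),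
                          i + 1 := add_entry_value n m (i + 1) (- step_sign d) (u ! (i + 1))]"
  by (simp add: shift_def add_entry_def add_entry_value_def step_sign_def)

lemma sum_mult_nth_list_update:
  fixes c :: "nat \<Rightarrow> 'a::comm_ring"
  assumes "k < length xs"
  shows "(\<Sum>j\<le>K. c j * xs[k := x] ! j)
    = (\<Sum>j\<le>K. c j * xs ! j) + (if k \<le> K then c k * (x - xs ! k) else 0)"
proof -
  have "(\<Sum>j\<le>K. c j * xs[k := x] ! j)
      = (\<Sum>j\<le>K. c j * xs ! j + (if j = k then c k * (x - xs ! k) else 0))"
    using assms by (intro sum.cong) (auto simp: algebra_simps)
  then show ?thesis
    by (simp add: sum.distrib)
qed

lemma sum_mult_nth_shift:
  fixes c :: "nat \<Rightarrow> int"
  assumes "i \<le> m" "length u = m + 2"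
  shows "(\<Sum>j\<le>K. c j * shift n m (i, d) u ! j) = (\<Sum>j\<le>K. c j * u ! j)
     + (if i \<le> K then c i * (add_entry_value n m i (step_sign d) (u ! i) - u ! i) else 0)
     + (if i + 1 \<le> K
        then c (i + 1) * (add_entry_value n m (i + 1) (- step_sign d) (u ! (i + 1)) - u ! (i + 1))
        else 0)"
  using assms by (simp add: shift_eq_list_update sum_mult_nth_list_update)

text \<open>Entries i and i + 1 change by opposite amounts modulo n.\<close>
lemma shift_prefix_sum_dvd:
  assumes "i \<le> m" "length u = m + 2" "i \<noteq> q"
  shows "int n dvd (\<Sum>j\<le>q. shift n m (i, d) u ! j) - (\<Sum>j\<le>q. u ! j)"
proof (cases "i < q")
  case True
  let ?a = "add_entry_value n m i (step_sign d) (u ! i)"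
  let ?b = "add_entry_value n m (i + 1) (- step_sign d) (u ! (i + 1))"
  have "(\<Sum>j\<le>q. shift n m (i, d) u ! j) - (\<Sum>j\<le>q. u ! j)
      = (?a - (u ! i + step_sign d)) + (?b - (u ! (i + 1) + - step_sign d))"
    using sum_mult_nth_shift[OF assms(1,2), where c = "\<lambda>_. 1" and K = q] True by simp
  then show ?thesis
    by (simp only:) (intro dvd_add add_entry_value_cong)
next
  case False
  then show ?thesis
    using sum_mult_nth_shift[OF assms(1,2), where c = "\<lambda>_. 1" and K = q] assms(3) by simp
qed

lemma shift_is_pivot:
  assumes "is_pivot n m u p" "length u = m + 2" "i \<le> m" "int i \<noteq> p"
  shows "is_pivot n m (shift n m (i, d) u) p"
proof -
  have "int n dvd (\<Sum>j\<le>nat p. shift n m (i, d) u ! j)" if "0 \<le> p"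
  proof -
    have "i \<noteq> nat p"
      using assms(4) that by auto
    then have "int n dvd (\<Sum>j\<le>nat p. shift n m (i, d) u ! j) - (\<Sum>j\<le>nat p. u ! j)"
      using shift_prefix_sum_dvd[OF assms(3,2)] by blast
    moreover have "int n dvd (\<Sum>j\<le>nat p. u ! j)"
      using assms(1) that by (simp add: is_pivot_iff)
    ultimately show ?thesis
      by (metis diff_add_cancel dvd_add)
  qed
  then show ?thesis
    using assms(1) by (simp add: is_pivot_iff)
qed

lemma shift_yoke_vertex:
  assumes u: "yoke_vertex n m u" and i: "i \<le> m"
    and fst_inner: "i \<noteq> 0 \<Longrightarrow> u ! i + step_sign d \<in> {0, 1}"
    and snd_inner: "i \<noteq> m \<Longrightarrow> u ! (i + 1) - step_sign d \<in> {0, 1}"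
  shows "yoke_vertex n m (shift n m (i, d) u)"
proof -
  let ?v = "shift n m (i, d) u"
  have len: "length u = m + 2" and n: "1 \<le> n"
    using yoke_vertex_length[OF u] yoke_vertex_n_pos[OF u] .
  have buckets: "0 \<le> ?v ! j \<and> ?v ! j < int n" if "j = 0 \<or> j = m + 1" for j
    using that i len add_entry_value_bucket_range[OF n] yoke_vertex_bucket_range[OF u]
    by (auto simp: shift_eq_list_update nth_list_update)
  have inner: "?v ! j \<in> {0, 1}" if "j \<in> {1..m}" for j
    using that i len fst_inner snd_inner yoke_vertex_inner[OF u, of j]
    by (auto simp: shift_eq_list_update nth_list_update add_entry_value_inner)
  have len_v: "length ?v = m + 2"
    using len by (simp add: shift_eq_list_update)
  have "int n dvd sum_list ?v - sum_list u"
    unfolding sum_list_conv_sum_nth[OF len] sum_list_conv_sum_nth[OF len_v]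
    by (intro shift_prefix_sum_dvd[OF i len]) (use i in simp)
  moreover have "int n dvd sum_list u"
    using u by (simp add: yoke_vertex_def)
  ultimately have "int n dvd sum_list ?v"
    by (metis diff_add_cancel dvd_add)
  then show ?thesis
    using len_v buckets inner by (simp add: yoke_vertex_def)
qed

lemma is_wall_Cons: "is_wall m (s # P) p \<longleftrightarrow> is_wall m [s] p \<and> is_wall m P p"
  by (auto simp: is_wall_def)

lemma is_wall_imp_neq_pivot:
  "is_wall m [(i, d)] p \<Longrightarrow> i \<le> m \<Longrightarrow> -1 \<le> p \<Longrightarrow> p \<le> int m + 1 \<Longrightarrow> int i \<noteq> p"
  by (auto simp: is_wall_def split: if_splits)

lemma is_wall_away_from_pivot: "-1 \<le> p \<Longrightarrow> int i \<noteq> p \<Longrightarrow> is_wall m [(i, int i < p)] p"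
  by (auto simp: is_wall_def)

definition pivot_weight :: "nat \<Rightarrow> int \<Rightarrow> nat \<Rightarrow> int" where
  "pivot_weight m p j = (if int j \<le> p then int j else int m + 1 - int j)"

definition pivot_potential :: "nat \<Rightarrow> int \<Rightarrow> int list \<Rightarrow> int" where
  "pivot_potential m p u = (\<Sum>j\<le>m+1. pivot_weight m p j * u ! j)"

lemma pivot_weight_nonneg: "j \<le> m + 1 \<Longrightarrow> 0 \<le> pivot_weight m p j"
  by (simp add: pivot_weight_def)

lemma pivot_weight_0: "pivot_weight m p 0 = (if p < 0 then int m + 1 else 0)"
  by (simp add: pivot_weight_def)

lemma pivot_weight_Suc_last: "pivot_weight m p (Suc m) = (if int m + 1 \<le> p then int m + 1 else 0)"
  by (simp add: pivot_weight_def)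

lemma pivot_weight_Suc: "int i \<noteq> p \<Longrightarrow> pivot_weight m p (i + 1) = pivot_weight m p i + step_sign (int i < p)"
  by (auto simp: pivot_weight_def step_sign_def)

lemma pivot_potential_nonneg: "yoke_vertex n m u \<Longrightarrow> 0 \<le> pivot_potential m p u"
  unfolding pivot_potential_def
  by (intro sum_nonneg mult_nonneg_nonneg pivot_weight_nonneg yoke_vertex_nth_nonneg) auto

lemma pivot_potential_yoke_zero: "pivot_potential m p (yoke_zero m) = 0"
  unfolding pivot_potential_def yoke_zero_def by (intro sum.neutral) (auto simp del: replicate.simps)

text \<open>Reduction mod n affects only buckets. A bucket of positive weight is next to an outer
  pivot; the wall there lets the step only remove a unit from it, and reducing mod n can only
  raise the result.\<close>
lemma pivot_potential_shift:
  assumes u: "yoke_vertex n m u" and i: "i \<le> m" and p: "-1 \<le> p" "p \<le> int m + 1"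
    and wall: "is_wall m [(i, d)] p"
  shows "pivot_potential m p u + step_sign d * (pivot_weight m p i - pivot_weight m p (i + 1))
           \<le> pivot_potential m p (shift n m (i, d) u)"
    and "0 \<le> u ! i + step_sign d \<Longrightarrow> 0 \<le> u ! (i + 1) - step_sign d \<Longrightarrow>
           pivot_potential m p (shift n m (i, d) u)
             = pivot_potential m p u + step_sign d * (pivot_weight m p i - pivot_weight m p (i + 1))"
proof -
  let ?w = "pivot_weight m p" and ?\<delta> = "step_sign d"
  let ?a = "add_entry_value n m i ?\<delta> (u ! i)"
  let ?b = "add_entry_value n m (i + 1) (- ?\<delta>) (u ! (i + 1))"
  have len: "length u = m + 2"
    using u by (rule yoke_vertex_length)
  have change: "pivot_potential m p (shift n m (i, d) u)
      = pivot_potential m p u + ?w i * (?a - u ! i) + ?w (i + 1) * (?b - u ! (i + 1))"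
    using sum_mult_nth_shift[OF i len, where c = ?w and K = "m + 1"] i
    by (simp add: pivot_potential_def)
  have fst: "?w i * ?\<delta> \<le> ?w i * (?a - u ! i) \<and> (0 \<le> u ! i + ?\<delta> \<longrightarrow> ?w i * (?a - u ! i) = ?w i * ?\<delta>)"
  proof (cases "i = 0 \<and> p < 0")
    case True
    then have \<delta>: "?\<delta> = -1"
      using wall p by (auto simp: is_wall_def step_sign_def)
    have "0 \<le> u ! i" "u ! i < int n"
      using yoke_vertex_bucket_range[OF u] True by auto
    then have ge: "-1 \<le> ?a - u ! i" and eq: "0 \<le> u ! i + ?\<delta> \<Longrightarrow> ?a - u ! i = -1"
      using \<delta> add_entry_value_minus_one_ge[of "u ! i" n m i] add_entry_value_eq[of "u ! i" "-1" n m i]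
      by simp_all
    show ?thesis
      using mult_left_mono[OF ge pivot_weight_nonneg[of i m p]] eq \<delta> i by simp
  next
    case False
    then have eq: "?w i * (?a - u ! i) = ?w i * ?\<delta>"
      using i by (cases "i = 0") (auto simp: pivot_weight_0 add_entry_value_inner)
    show ?thesis
      unfolding eq by simp
  qed
  have snd: "- ?w (i + 1) * ?\<delta> \<le> ?w (i + 1) * (?b - u ! (i + 1))
      \<and> (0 \<le> u ! (i + 1) - ?\<delta> \<longrightarrow> ?w (i + 1) * (?b - u ! (i + 1)) = - ?w (i + 1) * ?\<delta>)"
  proof (cases "i = m \<and> int m + 1 \<le> p")
    case True
    then have \<delta>: "?\<delta> = 1"
      using wall p by (auto simp: is_wall_def step_sign_def)
    have "0 \<le> u ! (i + 1)" "u ! (i + 1) < int n"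
      using yoke_vertex_bucket_range[OF u] True by auto
    then have ge: "-1 \<le> ?b - u ! (i + 1)" and eq: "0 \<le> u ! (i + 1) - ?\<delta> \<Longrightarrow> ?b - u ! (i + 1) = -1"
      using \<delta> add_entry_value_minus_one_ge[of "u ! (i + 1)" n m "i + 1"]
        add_entry_value_eq[of "u ! (i + 1)" "-1" n m "i + 1"]
      by simp_all
    show ?thesis
      using mult_left_mono[OF ge pivot_weight_nonneg[of "i + 1" m p]] eq \<delta> i by simp
  next
    case False
    then have eq: "?w (i + 1) * (?b - u ! (i + 1)) = - ?w (i + 1) * ?\<delta>"
      using i by (cases "i = m") (auto simp: pivot_weight_Suc_last add_entry_value_inner)
    show ?thesis
      unfolding eq by simp
  qed
  show "pivot_potential m p u + ?\<delta> * (?w i - ?w (i + 1)) \<le> pivot_potential m p (shift n m (i, d) u)"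
    using change fst snd by (simp add: algebra_simps)
  show "pivot_potential m p (shift n m (i, d) u) = pivot_potential m p u + ?\<delta> * (?w i - ?w (i + 1))"
    if "0 \<le> u ! i + ?\<delta>" "0 \<le> u ! (i + 1) - ?\<delta>"
    using change fst snd that by (simp add: algebra_simps)
qed

lemma pivot_potential_shift_ge:
  assumes "yoke_vertex n m u" "i \<le> m" "-1 \<le> p" "p \<le> int m + 1" "is_wall m [(i, d)] p"
  shows "pivot_potential m p u - 1 \<le> pivot_potential m p (shift n m (i, d) u)"
proof -
  have "pivot_weight m p (i + 1) = pivot_weight m p i + step_sign (int i < p)"
    using pivot_weight_Suc is_wall_imp_neq_pivot[OF assms(5,2-4)] by blast
  then have "-1 \<le> step_sign d * (pivot_weight m p i - pivot_weight m p (i + 1))"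
    by (simp add: step_sign_def)
  then show ?thesis
    using pivot_potential_shift(1)[OF assms] by linarith
qed

lemma pivot_potential_le_path_length:
  assumes "yoke_path n m u P (yoke_zero m)" "is_wall m P p" "yoke_vertex n m u"
    and p: "-1 \<le> p" "p \<le> int m + 1"
  shows "pivot_potential m p u \<le> int (length P)"
  using assms(1-3)
proof (induction P arbitrary: u)
  case Nil
  then show ?case
    by (simp add: pivot_potential_yoke_zero)
next
  case (Cons s P)
  obtain i d where s: "s = (i, d)"
    by fastforce
  have i: "i \<le> m" and v: "yoke_vertex n m (shift n m s u)"
    and path: "yoke_path n m (shift n m s u) P (yoke_zero m)"
    using Cons.prems(1) s by auto
  have wall: "is_wall m [(i, d)] p" "is_wall m P p"
    using Cons.prems(2) is_wall_Cons[of m s P p] s by simp_all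
  have "pivot_potential m p u - 1 \<le> pivot_potential m p (shift n m s u)"
    using pivot_potential_shift_ge[OF Cons.prems(3) i p wall(1)] s by simp
  also have "\<dots> \<le> int (length P)"
    using Cons.IH[OF path wall(2) v] .
  finally show ?case
    by simp
qed

definition downhill_step :: "nat \<Rightarrow> int \<Rightarrow> int list \<Rightarrow> nat \<times> bool \<Rightarrow> bool" where
  "downhill_step m p u s \<longleftrightarrow> (case s of (i, d) \<Rightarrow> i \<le> m \<and>
     (if d then int i < p \<and> 0 < u ! (i + 1) \<and> (i \<noteq> 0 \<longrightarrow> u ! i = 0)
      else p < int i \<and> 0 < u ! i \<and> (i \<noteq> m \<longrightarrow> u ! (i + 1) = 0)))"

lemma downhill_step_shift:
  assumes u: "yoke_vertex n m u" and piv: "is_pivot n m u p" and s: "downhill_step m p u (i, d)"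
  shows "is_wall m [(i, d)] p"
    and "yoke_vertex n m (shift n m (i, d) u)"
    and "is_pivot n m (shift n m (i, d) u) p"
    and "pivot_potential m p (shift n m (i, d) u) = pivot_potential m p u - 1"
proof -
  have p: "-1 \<le> p" "p \<le> int m + 1"
    using piv by (simp_all add: is_pivot_iff)
  have i: "i \<le> m" and d: "d \<longleftrightarrow> int i < p" and ip: "int i \<noteq> p"
    using s by (auto simp: downhill_step_def split: if_splits)
  show wall: "is_wall m [(i, d)] p"
    using is_wall_away_from_pivot[OF p(1) ip] d by simp
  show "yoke_vertex n m (shift n m (i, d) u)"
  proof (rule shift_yoke_vertex[OF u i])
    show "u ! i + step_sign d \<in> {0, 1}" if "i \<noteq> 0"
      using s yoke_vertex_inner[OF u, of i] that i by (cases d) (auto simp: downhill_step_def step_sign_def)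
    show "u ! (i + 1) - step_sign d \<in> {0, 1}" if "i \<noteq> m"
      using s yoke_vertex_inner[OF u, of "i + 1"] that i by (cases d) (auto simp: downhill_step_def step_sign_def)
  qed
  show "is_pivot n m (shift n m (i, d) u) p"
    using shift_is_pivot[OF piv yoke_vertex_length[OF u] i ip] .
  have "0 \<le> u ! i + step_sign d" "0 \<le> u ! (i + 1) - step_sign d"
    using s yoke_vertex_nth_nonneg[OF u, of i] yoke_vertex_nth_nonneg[OF u, of "i + 1"] i
    by (auto simp: downhill_step_def step_sign_def split: if_splits)
  then have "pivot_potential m p (shift n m (i, d) u)
      = pivot_potential m p u + step_sign d * (pivot_weight m p i - pivot_weight m p (i + 1))"
    using pivot_potential_shift(2)[OF u i p wall] by blast
  also have "step_sign d * (pivot_weight m p i - pivot_weight m p (i + 1)) = -1"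
    using pivot_weight_Suc[OF ip] d by (simp add: step_sign_def)
  finally show "pivot_potential m p (shift n m (i, d) u) = pivot_potential m p u - 1"
    by simp
qed

lemma downhill_step_left_of_pivot:
  assumes u: "yoke_vertex n m u" and j: "1 \<le> j" "j \<le> m" "int j \<le> p" "u ! j = 1"
  shows "\<exists>s. downhill_step m p u s"
proof -
  let ?P = "\<lambda>j. 1 \<le> j \<and> j \<le> m \<and> int j \<le> p \<and> u ! j = 1"
  obtain k where k: "?P k" and least: "\<And>l. l < k \<Longrightarrow> \<not> ?P l"
    using exists_least_iff[of ?P] j by blast
  have "downhill_step m p u (k - 1, True)"
    using k least[of "k - 1"] yoke_vertex_inner[OF u, of "k - 1"] by (auto simp: downhill_step_def)
  then show ?thesis ..
qed

lemma downhill_step_right_of_pivot: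
  assumes u: "yoke_vertex n m u" and j: "1 \<le> j" "j \<le> m" "p < int j" "u ! j = 1"
  shows "\<exists>s. downhill_step m p u s"
proof -
  let ?P = "\<lambda>j. 1 \<le> j \<and> j \<le> m \<and> p < int j \<and> u ! j = 1"
  have bounded: "\<And>l. ?P l \<Longrightarrow> l \<le> m"
    by blast
  obtain k where k: "?P k" and greatest: "\<And>l. ?P l \<Longrightarrow> l \<le> k"
    using GreatestI_ex_nat[of ?P, OF _ bounded] Greatest_le_nat[of ?P, OF _ bounded] j by blast
  have "downhill_step m p u (k, False)"
    using k greatest[of "k + 1"] yoke_vertex_inner[OF u, of "k + 1"] by (auto simp: downhill_step_def)
  then show ?thesis ..
qed

lemma downhill_step_from_bucket:
  assumes u: "yoke_vertex n m u" and piv: "is_pivot n m u p" and nz: "u \<noteq> yoke_zero m"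
    and inner: "\<And>j. 1 \<le> j \<Longrightarrow> j \<le> m \<Longrightarrow> u ! j = 0"
  shows "\<exists>s. downhill_step m p u s"
proof -
  have len: "length u = m + 2"
    using u by (rule yoke_vertex_length)
  have b0: "0 \<le> u ! 0" "u ! 0 < int n" and b1: "0 \<le> u ! (m + 1)" "u ! (m + 1) < int n"
    using yoke_vertex_bucket_range[OF u] by auto
  have prefix: "(\<Sum>j\<le>k. u ! j) = u ! 0" if "k \<le> m" for k
    using that inner by (induction k) auto
  have "sum_list u = u ! 0 + u ! (m + 1)"
    using prefix[of m] by (simp add: sum_list_conv_sum_nth[OF len])
  then have "int n dvd u ! 0 + u ! (m + 1)"
    using u by (simp add: yoke_vertex_def)
  then have "u ! 0 = 0 \<longleftrightarrow> u ! (m + 1) = 0"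
    using b0 b1 by (auto simp: dvd_eq_mod_eq_0)
  moreover have "u ! 0 \<noteq> 0 \<or> u ! (m + 1) \<noteq> 0"
  proof (rule ccontr)
    assume "\<not> ?thesis"
    then have "u ! j = 0" if "j < m + 2" for j
      using that inner[of j] by (cases "j = 0 \<or> j = m + 1") auto
    then have "u = yoke_zero m"
      using len by (intro nth_equalityI) (simp_all add: yoke_zero_def del: replicate.simps)
    with nz show False ..
  qed
  ultimately have pos: "0 < u ! 0" "0 < u ! (m + 1)"
    using b0 b1 by auto
  consider "p < 0" | "0 \<le> p" "p \<le> int m" | "int m < p"
    by linarith
  then show ?thesis
  proof cases
    case 1
    then have "downhill_step m p u (0, False)"
      using pos inner[of 1] by (auto simp: downhill_step_def)
    then show ?thesis ..
  next
    case 2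
    then have "int n dvd u ! 0"
      using piv prefix[of "nat p"] by (simp add: is_pivot_iff)
    then show ?thesis
      using pos b0 by (simp add: dvd_eq_mod_eq_0)
  next
    case 3
    then have "downhill_step m p u (m, True)"
      using pos inner[of m] by (auto simp: downhill_step_def)
    then show ?thesis ..
  qed
qed

lemma exists_downhill_step:
  assumes u: "yoke_vertex n m u" and piv: "is_pivot n m u p" and nz: "u \<noteq> yoke_zero m"
  shows "\<exists>s. downhill_step m p u s"
proof (cases "\<exists>j. 1 \<le> j \<and> j \<le> m \<and> u ! j = 1")
  case True
  then obtain j where "1 \<le> j" "j \<le> m" "u ! j = 1"
    by blast
  then show ?thesis
    using downhill_step_left_of_pivot[OF u] downhill_step_right_of_pivot[OF u] by (cases "int j \<le> p") auto
next
  case False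
  then have "\<And>j. 1 \<le> j \<Longrightarrow> j \<le> m \<Longrightarrow> u ! j = 0"
    using yoke_vertex_inner[OF u] by blast
  then show ?thesis
    using downhill_step_from_bucket[OF u piv nz] by blast
qed

lemma exists_wall_path_of_pivot_potential_length:
  assumes "yoke_vertex n m u" "is_pivot n m u p"
  shows "\<exists>P. yoke_path n m u P (yoke_zero m) \<and> is_wall m P p \<and> int (length P) = pivot_potential m p u"
proof -
  have "\<exists>P. yoke_path n m u P (yoke_zero m) \<and> is_wall m P p \<and> int (length P) = pivot_potential m p u"
    if "pivot_potential m p u = int k" "yoke_vertex n m u" "is_pivot n m u p" for k u
    using that
  proof (induction k arbitrary: u rule: less_induct)
    case (less k)
    show ?case
    proof (cases "u = yoke_zero m")
      case True
      then show ?thesis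
        by (intro exI[of _ "[]"]) (simp add: is_wall_def pivot_potential_yoke_zero)
    next
      case False
      obtain i d where s: "downhill_step m p u (i, d)"
        using exists_downhill_step[OF less.prems(2,3) False] by auto
      note step = downhill_step_shift[OF less.prems(2,3) s]
      let ?u' = "shift n m (i, d) u"
      have "0 \<le> pivot_potential m p ?u'"
        using pivot_potential_nonneg[OF step(2)] .
      then have "pivot_potential m p ?u' = int (k - 1)" "k - 1 < k"
        using step(4) less.prems(1) by linarith+
      then obtain P where P: "yoke_path n m ?u' P (yoke_zero m)" "is_wall m P p"
        "int (length P) = pivot_potential m p ?u'"
        using less.IH step(2,3) by blast
      have "i \<le> m"
        using s by (simp add: downhill_step_def)
      then show ?thesis
        using P step(1,2,4) is_wall_Cons[of m "(i, d)" P p] by (intro exI[of _ "(i, d) # P"]) auto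
    qed
  qed
  then show ?thesis
    using assms pivot_potential_nonneg[OF assms(1)] by (metis nonneg_int_cases)
qed

lemma ps_eq_pivot_potential:
  assumes "yoke_vertex n m v" "is_pivot n m v p"
  shows "ps n m p v = enat (nat (pivot_potential m p v))"
  unfolding ps_def
proof (rule cInf_eq_minimum)
  obtain P where "yoke_path n m v P (yoke_zero m)" "is_wall m P p" "int (length P) = pivot_potential m p v"
    using exists_wall_path_of_pivot_potential_length[OF assms] by blast
  then show "enat (nat (pivot_potential m p v)) \<in> {enat (length P) |P. yoke_path n m v P (yoke_zero m) \<and> is_wall m P p}"
    by force
next
  fix x
  assume "x \<in> {enat (length P) |P. yoke_path n m v P (yoke_zero m) \<and> is_wall m P p}"
  then obtain P where "x = enat (length P)" "yoke_path n m v P (yoke_zero m)" "is_wall m P p"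
    by blast
  moreover have "-1 \<le> p" "p \<le> int m + 1"
    using assms(2) by (simp_all add: is_pivot_iff)
  ultimately show "enat (nat (pivot_potential m p v)) \<le> x"
    using pivot_potential_le_path_length[OF _ _ assms(1)] by fastforce
qed

lemma pivot_potential_eq_formula:
  assumes "-1 \<le> p" "p \<le> int m + 1"
  shows "pivot_potential m p v
    = (\<Sum>i\<in>{1..p}. i * v ! nat i) + (\<Sum>i\<in>{p+1..int m}. (int m + 1 - i) * v ! nat i)"
proof -
  let ?A = "{1..nat p}" and ?B = "{nat (p + 1)..m}"
  have "pivot_potential m p v = (\<Sum>j\<le>m+1. (if j \<in> ?A then int j * v ! j else 0)
      + (if j \<in> ?B then (int m + 1 - int j) * v ! j else 0))"
    unfolding pivot_potential_def using assms by (intro sum.cong) (auto simp: pivot_weight_def)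
  also have "\<dots> = (\<Sum>j\<in>?A. int j * v ! j) + (\<Sum>j\<in>?B. (int m + 1 - int j) * v ! j)"
  proof -
    have "{..m+1} \<inter> ?A = ?A" "{..m+1} \<inter> ?B = ?B"
      using assms by auto
    then show ?thesis
      by (simp only: sum.distrib sum.inter_restrict[OF finite_atMost, symmetric])
  qed
  also have "\<dots> = (\<Sum>i\<in>{1..p}. i * v ! nat i) + (\<Sum>i\<in>{p+1..int m}. (int m + 1 - i) * v ! nat i)"
  proof -
    have A: "{1..p} = int ` ?A" and B: "{p+1..int m} = int ` ?B"
      using assms by (auto simp: image_int_atLeastAtMost)
    show ?thesis
      unfolding A B by (simp add: sum.reindex)
  qed
  finally show ?thesis .
qed

lemma sum_atLeast1_atMost_eq_choose_2: "(\<Sum>j\<in>{1..k}. j) = (k + 1) choose 2"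
  by (induction k) (simp_all add: numeral_2_eq_2)

lemma pivot_potential_le_binomial:
  assumes v: "yoke_vertex n m v" and p: "0 \<le> p" "p \<le> int m"
  shows "pivot_potential m p v \<le> int (((nat p + 1) choose 2) + ((m - nat p + 1) choose 2))"
proof -
  define k where "k = nat p"
  have k: "k \<le> m" "p = int k"
    using p by (auto simp: k_def)
  have "pivot_potential m p v = (\<Sum>j\<in>{1..m}. pivot_weight m p j * v ! j)"
    unfolding pivot_potential_def using k by (intro sum.mono_neutral_right) (auto simp: pivot_weight_def)
  also have "\<dots> \<le> (\<Sum>j\<in>{1..m}. pivot_weight m p j)"
    using yoke_vertex_inner[OF v] pivot_weight_nonneg[of _ m p] by (intro sum_mono) (fastforce simp: mult_left_le)
  also have "\<dots> = (\<Sum>j\<in>{1..k}. pivot_weight m p j) + (\<Sum>j\<in>{k+1..m}. pivot_weight m p j)"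
    using k by (subst sum.union_disjoint[symmetric]) (auto intro: sum.cong)
  also have "(\<Sum>j\<in>{1..k}. pivot_weight m p j) = int (\<Sum>j\<in>{1..k}. j)"
    using k by (simp add: pivot_weight_def)
  also have "(\<Sum>j\<in>{k+1..m}. pivot_weight m p j) = int (\<Sum>j\<in>{k+1..m}. m + 1 - j)"
  proof -
    have "pivot_weight m p j = int (m + 1 - j)" if "j \<in> {k+1..m}" for j
      using that k by (auto simp: pivot_weight_def)
    then show ?thesis
      unfolding of_nat_sum by (rule sum.cong[OF refl])
  qed
  also have "(\<Sum>j\<in>{k+1..m}. m + 1 - j) = (\<Sum>j\<in>{1..m-k}. j)"
    by (rule sum.reindex_bij_witness[where i = "\<lambda>j. m + 1 - j" and j = "\<lambda>j. m + 1 - j"]) auto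
  also have "int (\<Sum>j\<in>{1..k}. j) + int (\<Sum>j\<in>{1..m-k}. j) = int (((k + 1) choose 2) + ((m - k + 1) choose 2))"
    by (simp only: sum_atLeast1_atMost_eq_choose_2 of_nat_add)
  finally show ?thesis
    by (simp add: k_def)
qed

theorem corollary4p12:
  fixes n m :: nat and v :: "int list" and p :: int
  assumes "n \<ge> 1" and "m \<ge> 2"
    and "yoke_vertex n m v"
    and "is_pivot n m v p"
  shows "ps n m p v = enat (nat ((\<Sum>i\<in>{1..p}. i * v ! nat i)
                                  + (\<Sum>i\<in>{p+1..int m}. (int m + 1 - i) * v ! nat i)))
     \<and> (0 \<le> p \<and> p \<le> int m \<longrightarrow>
          ps n m p v \<le> enat (((nat p + 1) choose 2) + ((m - nat p + 1) choose 2)))"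
proof -
  have ps: "ps n m p v = enat (nat (pivot_potential m p v))"
    using ps_eq_pivot_potential[OF assms(3,4)] .
  have "-1 \<le> p" "p \<le> int m + 1"
    using assms(4) by (simp_all add: is_pivot_iff)
  then have formula: "pivot_potential m p v = (\<Sum>i\<in>{1..p}. i * v ! nat i)
                                  + (\<Sum>i\<in>{p+1..int m}. (int m + 1 - i) * v ! nat i)"
    by (rule pivot_potential_eq_formula)
  have "ps n m p v \<le> enat (((nat p + 1) choose 2) + ((m - nat p + 1) choose 2))" if "0 \<le> p" "p \<le> int m"
    using pivot_potential_le_binomial[OF assms(3) that] unfolding ps by simp
  then show ?thesis
    using ps formula by simp
qed


end
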